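(* For every integer $n\ge1$ there exists a graph (multigraph) $\mathcal{G}=(\mathcal{V},\mathcal{E})$ with $V=n+1$ vertices such that for any algorithm $\mathcal{A}$ that is $(\epsilon,\delta)$-differentially private on $\mathcal{G}$ and outputs a spanning tree of $\mathcal{G}$, there exist edge weights $w:\mathcal{E}\to\{0,1\}$ such that the expected weight of the spanning tree $\mathcal{A}(w)$ exceeds the weight of the minimum spanning tree of $(\mathcal{G},w)$ by at least $\alpha=(V-1)\cdot\frac{1-(1+e^{\epsilon})\delta}{1+e^{2\epsilon}}$. In particular, for sufficiently small $\epsilon$ and $\delta$, $\alpha\ge0.49(V-1)$.
   Context: Private edge weight model (with real, possibly negative, weights): for a graph $\mathcal{G}=(\mathcal{V},\mathcal{E})$ (parallel edges allowed), a weight function is $w:\mathcal{E}\to\mathbb{R}$. Two weight functions $w,w'$ are neighboring if $\sum_{e\in\mathcal{E}}|w(e)-w'(e)|\le1$. A randomized algorithm $\mathcal{A}$ on weight functions is $(\epsilon,\delta)$-differentially private on $\mathcal{G}$ if for all neighboring $w,w'$ and all sets $S$ of outputs, $\Pr[\mathcal{A}(w)\in S]\le e^{\epsilon}\Pr[\mathcal{A}(w')\in S]+\delta$. The weight of a spanning tree is the sum of the weights of its edges. *)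

theory Defs
  imports "HOL-Probability.Probability"
begin

text \<open>A (loopless) multigraph is given by a finite vertex set V, a finite edge set E
  and an endpoint map ends; parallel edges are allowed since ends need not be injective.\<close>

definition multigraph :: "'v set \<Rightarrow> 'e set \<Rightarrow> ('e \<Rightarrow> 'v \<times> 'v) \<Rightarrow> bool" where
  "multigraph V E ends \<longleftrightarrow> finite V \<and> finite E \<and>
     (\<forall>e\<in>E. fst (ends e) \<in> V \<and> snd (ends e) \<in> V \<and> fst (ends e) \<noteq> snd (ends e))"

definition adj :: "('e \<Rightarrow> 'v \<times> 'v) \<Rightarrow> 'e set \<Rightarrow> 'v \<Rightarrow> 'v \<Rightarrow> bool" where
  "adj ends F u v \<longleftrightarrow> (\<exists>e\<in>F. ends e = (u, v) \<or> ends e = (v, u))"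

definition connected_by :: "'v set \<Rightarrow> ('e \<Rightarrow> 'v \<times> 'v) \<Rightarrow> 'e set \<Rightarrow> bool" where
  "connected_by V ends F \<longleftrightarrow> (\<forall>u\<in>V. \<forall>v\<in>V. (adj ends F)\<^sup>*\<^sup>* u v)"

text \<open>Spanning tree: a set of edges forming a connected spanning subgraph with |V| - 1 edges
  (equivalently, connected and acyclic).\<close>
definition spanning_tree :: "'v set \<Rightarrow> 'e set \<Rightarrow> ('e \<Rightarrow> 'v \<times> 'v) \<Rightarrow> 'e set \<Rightarrow> bool" where
  "spanning_tree V E ends T \<longleftrightarrow> T \<subseteq> E \<and> connected_by V ends T \<and> card T + 1 = card V"

definition tree_weight :: "('e \<Rightarrow> real) \<Rightarrow> 'e set \<Rightarrow> real" where
  "tree_weight w T = (\<Sum>e\<in>T. w e)"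

definition mst_weight :: "'v set \<Rightarrow> 'e set \<Rightarrow> ('e \<Rightarrow> 'v \<times> 'v) \<Rightarrow> ('e \<Rightarrow> real) \<Rightarrow> real" where
  "mst_weight V E ends w = Min {tree_weight w T | T. spanning_tree V E ends T}"

definition neighboring :: "'e set \<Rightarrow> ('e \<Rightarrow> real) \<Rightarrow> ('e \<Rightarrow> real) \<Rightarrow> bool" where
  "neighboring E w w' \<longleftrightarrow> (\<Sum>e\<in>E. \<bar>w e - w' e\<bar>) \<le> 1"

definition edge_dp :: "real \<Rightarrow> real \<Rightarrow> 'e set \<Rightarrow> (('e \<Rightarrow> real) \<Rightarrow> 'o pmf) \<Rightarrow> bool" where
  "edge_dp \<epsilon> \<delta> E A \<longleftrightarrow> (\<forall>w w' S. neighboring E w w' \<longrightarrow>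
      measure_pmf.prob (A w) S \<le> exp \<epsilon> * measure_pmf.prob (A w') S + \<delta>)"

definition alpha_bound :: "nat \<Rightarrow> real \<Rightarrow> real \<Rightarrow> real" where
  "alpha_bound nV \<epsilon> \<delta> = (real nV - 1) * (1 - (1 + exp \<epsilon>) * \<delta>) / (1 + exp (2 * \<epsilon>))"

end

theory Submission
  imports Defs
begin

text \<open>Take the star on the vertices 0, ..., n with every edge doubled: leaf i is joined to the
  centre by the parallel edges 2i and 2i+1. A hidden subset S of the leaves decides which edge of
  each pair has weight 1 (the heavy edge) and which has weight 0, so the minimum spanning tree has
  weight 0 while a spanning tree pays 1 for every heavy edge it uses. Moving i into S swaps the two
  weights of pair i, a change at distance 2; by group privacy the two choices cannot be told apart,
  and since every tree uses one edge of each pair, the probabilities of picking the heavy edge under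
  the two choices add up to at least 2(1 - (1 + e^\<epsilon>)\<delta>)/(1 + e^{2\<epsilon>}). Averaging over all
  2^n subsets yields one S whose expected weight is at least n times that bound.\<close>

lemma neighboring_sym: "neighboring E w w' \<longleftrightarrow> neighboring E w' w"
  unfolding neighboring_def by (simp add: abs_minus_commute)

lemma neighboring_fun_upd:
  assumes "finite E" "\<bar>w x - v\<bar> \<le> 1"
  shows "neighboring E w (w(x := v))"
proof -
  have "(\<Sum>e\<in>E. \<bar>w e - (w(x := v)) e\<bar>) = (\<Sum>e\<in>E. if e = x then \<bar>w x - v\<bar> else 0)"
    by (rule sum.cong) auto
  also have "\<dots> \<le> 1" using assms by (simp add: sum.delta)
  finally show ?thesis unfolding neighboring_def .
qed

lemma edge_dp_distance_two:
  assumes "edge_dp \<epsilon> \<delta> E A" "neighboring E w w'" "neighboring E w' w''"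
  shows "measure_pmf.prob (A w) X \<le> exp (2 * \<epsilon>) * measure_pmf.prob (A w'') X + (1 + exp \<epsilon>) * \<delta>"
proof -
  have "measure_pmf.prob (A w) X \<le> exp \<epsilon> * measure_pmf.prob (A w') X + \<delta>"
    using assms unfolding edge_dp_def by blast
  also have "exp \<epsilon> * measure_pmf.prob (A w') X \<le> exp \<epsilon> * (exp \<epsilon> * measure_pmf.prob (A w'') X + \<delta>)"
    using assms unfolding edge_dp_def by (intro mult_left_mono) auto
  finally show ?thesis
    unfolding mult_2 exp_add by (simp add: distrib_left distrib_right mult.assoc)
qed

lemma prob_Un_ge_one:
  assumes "AE x in measure_pmf p. x \<in> X \<or> x \<in> Y"
  shows "1 \<le> measure_pmf.prob p X + measure_pmf.prob p Y"
proof -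
  have "measure_pmf.prob p (X \<union> Y) = 1"
    using assms by (subst measure_pmf.prob_eq_1) auto
  moreover have "measure_pmf.prob p (X \<union> Y) \<le> measure_pmf.prob p X + measure_pmf.prob p Y"
    by (rule measure_Un_le) auto
  ultimately show ?thesis by linarith
qed

lemma swapped_pair_lower_bound:
  fixes p p' q q' c E :: real
  assumes "p \<le> E * q + c" "q' \<le> E * p' + c" "1 \<le> p + p'" "1 \<le> q + q'" "0 \<le> E"
  shows "2 * ((1 - c) / (1 + E)) \<le> p' + q"
proof -
  have "2 * (1 - c) \<le> (1 + E) * (p' + q)"
    using assms by (simp add: algebra_simps)
  then show ?thesis using \<open>0 \<le> E\<close> by (simp add: pos_divide_le_eq mult.commute)
qed

lemma hypercube_averaging:
  fixes P :: "'a set \<Rightarrow> 'a \<Rightarrow> real"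
  assumes "finite I"
    and pair: "\<And>S i. S \<subseteq> I \<Longrightarrow> i \<in> I \<Longrightarrow> i \<notin> S \<Longrightarrow> 2 * K \<le> P S i + P (insert i S) i"
  shows "\<exists>S\<subseteq>I. real (card I) * K \<le> (\<Sum>i\<in>I. P S i)"
proof (rule ccontr)
  assume "\<not> ?thesis"
  then have small: "(\<Sum>i\<in>I. P S i) < real (card I) * K" if "S \<in> Pow I" for S
    using that by auto
  have column: "2 ^ card I * K \<le> (\<Sum>S\<in>Pow I. P S i)" if "i \<in> I" for i
  proof -
    define J where "J = I - {i}"
    have J: "I = insert i J" "i \<notin> J" "finite J" using that assms(1) unfolding J_def by auto
    have "(\<Sum>S\<in>Pow I. P S i) = (\<Sum>S\<in>Pow J. P S i) + (\<Sum>S\<in>insert i ` Pow J. P S i)"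
      unfolding J(1) Pow_insert using J by (intro sum.union_disjoint) auto
    also have "\<dots> = (\<Sum>S\<in>Pow J. P S i + P (insert i S) i)"
      using J(2) by (subst sum.reindex) (auto simp: inj_on_def sum.distrib)
    also have "\<dots> \<ge> (\<Sum>S\<in>Pow J. 2 * K)"
      by (intro sum_mono pair) (use J in auto)
    finally have "(\<Sum>S\<in>Pow J. 2 * K) \<le> (\<Sum>S\<in>Pow I. P S i)" .
    then show ?thesis using J by (simp add: card_Pow)
  qed
  have "real (card I) * (2 ^ card I * K) \<le> (\<Sum>i\<in>I. \<Sum>S\<in>Pow I. P S i)"
    using sum_mono[OF column] by simp
  also have "\<dots> = (\<Sum>S\<in>Pow I. \<Sum>i\<in>I. P S i)" by (rule sum.swap)
  also have "\<dots> < (\<Sum>S\<in>Pow I. real (card I) * K)"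
    using assms(1) small by (intro sum_strict_mono) auto
  also have "\<dots> = real (card I) * (2 ^ card I * K)"
    using assms(1) by (simp add: card_Pow mult.left_commute)
  finally show False by simp
qed

lemma connected_by_star:
  assumes "\<And>v. v \<in> V \<Longrightarrow> v \<noteq> c \<Longrightarrow> \<exists>e\<in>F. ends e = (c, v)"
  shows "connected_by V ends F"
proof -
  have "(adj ends F)\<^sup>*\<^sup>* c v \<and> (adj ends F)\<^sup>*\<^sup>* v c" if "v \<in> V" for v
  proof (cases "v = c")
    case False
    then have "adj ends F c v" "adj ends F v c"
      using assms that unfolding adj_def by fastforce+
    then show ?thesis by auto
  qed simp
  then show ?thesis unfolding connected_by_def by (meson rtranclp_trans)
qed

lemma mst_weight_le:
  assumes "finite E" "spanning_tree V E ends T"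
  shows "mst_weight V E ends w \<le> tree_weight w T"
proof -
  have "{tree_weight w T | T. spanning_tree V E ends T} \<subseteq> tree_weight w ` Pow E"
    unfolding spanning_tree_def by blast
  then have "finite {tree_weight w T | T. spanning_tree V E ends T}"
    using assms(1) by (meson finite_Pow_iff finite_imageI finite_subset)
  then show ?thesis unfolding mst_weight_def using assms(2) by (auto intro: Min_le)
qed

lemma expectation_tree_weight:
  assumes "finite E" "\<And>T. T \<in> set_pmf p \<Longrightarrow> T \<subseteq> E"
  shows "measure_pmf.expectation p (tree_weight w) = (\<Sum>e\<in>E. w e * measure_pmf.prob p {T. e \<in> T})"
proof -
  have "finite (set_pmf p)" using assms by (meson Pow_iff finite_Pow_iff finite_subset subsetI)
  have "measure_pmf.expectation p (tree_weight w) =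
        measure_pmf.expectation p (\<lambda>T. \<Sum>e\<in>E. w e * indicator {T. e \<in> T} T)"
  proof (rule integral_cong_AE)
    show "AE T in measure_pmf p. tree_weight w T = (\<Sum>e\<in>E. w e * indicator {T. e \<in> T} T)"
      using assms unfolding tree_weight_def
      by (auto intro!: AE_pmfI simp: indicator_def sum.If_cases Int_absorb1)
  qed simp_all
  also have "\<dots> = (\<Sum>e\<in>E. measure_pmf.expectation p (\<lambda>T. w e * indicator {T. e \<in> T} T))"
    using \<open>finite (set_pmf p)\<close>
    by (intro Bochner_Integration.integral_sum integrable_measure_pmf_finite)
  also have "\<dots> = (\<Sum>e\<in>E. w e * measure_pmf.prob p {T. e \<in> T})"
    by simp
  finally show ?thesis .
qed

definition star_vertices :: "nat \<Rightarrow> nat set" where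
  "star_vertices n = {0..n}"

definition star_edges :: "nat \<Rightarrow> nat set" where
  "star_edges n = {2..2 * n + 1}"

definition star_ends :: "nat \<Rightarrow> nat \<times> nat" where
  "star_ends e = (0, e div 2)"

definition heavy_edge :: "nat set \<Rightarrow> nat \<Rightarrow> nat" where
  "heavy_edge S i = (if i \<in> S then 2 * i else 2 * i + 1)"

definition light_edge :: "nat set \<Rightarrow> nat \<Rightarrow> nat" where
  "light_edge S i = (if i \<in> S then 2 * i + 1 else 2 * i)"

definition hidden_weight :: "nat set \<Rightarrow> nat \<Rightarrow> real" where
  "hidden_weight S e = (if e = heavy_edge S (e div 2) then 1 else 0)"

lemma finite_star_edges: "finite (star_edges n)"
  by (simp add: star_edges_def)

lemma multigraph_star: "multigraph (star_vertices n) (star_edges n) star_ends"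
  unfolding multigraph_def star_vertices_def star_edges_def star_ends_def by auto

lemma card_star_vertices: "card (star_vertices n) = n + 1"
  by (simp add: star_vertices_def)

lemma connected_star_edges: "connected_by (star_vertices n) star_ends (star_edges n)"
proof (rule connected_by_star)
  fix v assume "v \<in> star_vertices n" "v \<noteq> 0"
  then show "\<exists>e\<in>star_edges n. star_ends e = (0, v)"
    by (intro bexI[of _ "2 * v"]) (auto simp: star_vertices_def star_edges_def star_ends_def)
qed

lemma spanning_tree_star_light_edges:
  "spanning_tree (star_vertices n) (star_edges n) star_ends (light_edge S ` {1..n})"
proof -
  have "inj_on (light_edge S) {1..n}"
    unfolding inj_on_def light_edge_def by (auto split: if_splits)
  then have "card (light_edge S ` {1..n}) = n" by (simp add: card_image)
  moreover have "connected_by (star_vertices n) star_ends (light_edge S ` {1..n})"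
  proof (rule connected_by_star)
    fix v assume "v \<in> star_vertices n" "v \<noteq> 0"
    then show "\<exists>e\<in>light_edge S ` {1..n}. star_ends e = (0, v)"
      by (intro bexI[of _ "light_edge S v"]) (auto simp: star_vertices_def star_ends_def light_edge_def)
  qed
  ultimately show ?thesis
    unfolding spanning_tree_def by (auto simp: star_vertices_def star_edges_def light_edge_def)
qed

lemma mst_weight_hidden_weight:
  "mst_weight (star_vertices n) (star_edges n) star_ends (hidden_weight S) \<le> 0"
proof -
  have "tree_weight (hidden_weight S) (light_edge S ` {1..n}) = 0"
    unfolding tree_weight_def hidden_weight_def heavy_edge_def light_edge_def
    by (intro sum.neutral) auto
  then show ?thesis
    using mst_weight_le[OF finite_star_edges spanning_tree_star_light_edges] by metis
qed

lemma spanning_tree_star_meets_pair: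
  assumes "spanning_tree (star_vertices n) (star_edges n) star_ends T" "i \<in> {1..n}"
  shows "2 * i \<in> T \<or> 2 * i + 1 \<in> T"
proof -
  have "(adj star_ends T)\<^sup>*\<^sup>* 0 i" "i \<noteq> 0"
    using assms unfolding spanning_tree_def connected_by_def star_vertices_def by auto
  then obtain u where "adj star_ends T u i" by (metis rtranclp.cases)
  then obtain e where "e \<in> T" "e div 2 = i"
    using \<open>i \<noteq> 0\<close> unfolding adj_def star_ends_def by auto
  moreover have "e = 2 * i \<or> e = 2 * i + 1" using \<open>e div 2 = i\<close> by presburger
  ultimately show ?thesis by auto
qed

lemma expectation_hidden_weight:
  assumes "\<And>T. T \<in> set_pmf p \<Longrightarrow> spanning_tree (star_vertices n) (star_edges n) star_ends T"
  shows "measure_pmf.expectation p (tree_weight (hidden_weight S)) =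
         (\<Sum>i\<in>{1..n}. measure_pmf.prob p {T. heavy_edge S i \<in> T})"
proof -
  have "measure_pmf.expectation p (tree_weight (hidden_weight S)) =
        (\<Sum>e\<in>star_edges n. hidden_weight S e * measure_pmf.prob p {T. e \<in> T})"
    using assms by (intro expectation_tree_weight finite_star_edges) (auto simp: spanning_tree_def)
  also have "\<dots> = (\<Sum>e\<in>heavy_edge S ` {1..n}. hidden_weight S e * measure_pmf.prob p {T. e \<in> T})"
  proof (rule sum.mono_neutral_right[OF finite_star_edges])
    show "heavy_edge S ` {1..n} \<subseteq> star_edges n"
      by (auto simp: star_edges_def heavy_edge_def)
    have "e \<in> heavy_edge S ` {1..n}" if "e \<in> star_edges n" "hidden_weight S e \<noteq> 0" for e
      using that by (intro image_eqI[of _ _ "e div 2"])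
        (auto simp: star_edges_def hidden_weight_def split: if_splits)
    then show "\<forall>e\<in>star_edges n - heavy_edge S ` {1..n}.
        hidden_weight S e * measure_pmf.prob p {T. e \<in> T} = 0"
      by auto
  qed
  also have "\<dots> = (\<Sum>e\<in>heavy_edge S ` {1..n}. measure_pmf.prob p {T. e \<in> T})"
    by (rule sum.cong) (auto simp: hidden_weight_def heavy_edge_def)
  also have "\<dots> = (\<Sum>i\<in>{1..n}. measure_pmf.prob p {T. heavy_edge S i \<in> T})"
    by (subst sum.reindex) (auto simp: inj_on_def heavy_edge_def split: if_splits)
  finally show ?thesis .
qed

lemma heavy_edge_pair_bound:
  assumes dp: "edge_dp \<epsilon> \<delta> (star_edges n) A"
    and trees: "\<And>w T. T \<in> set_pmf (A w) \<Longrightarrow> spanning_tree (star_vertices n) (star_edges n) star_ends T"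
    and "i \<in> {1..n}" "i \<notin> S"
  shows "2 * ((1 - (1 + exp \<epsilon>) * \<delta>) / (1 + exp (2 * \<epsilon>))) \<le>
         measure_pmf.prob (A (hidden_weight S)) {T. heavy_edge S i \<in> T} +
         measure_pmf.prob (A (hidden_weight (insert i S))) {T. heavy_edge (insert i S) i \<in> T}"
proof -
  define w where "w = hidden_weight S"
  define w' where "w' = w(2 * i := 1)"
  define w'' where "w'' = hidden_weight (insert i S)"
  have w'': "w'' = w'(2 * i + 1 := 0)"
    using \<open>i \<notin> S\<close> by (auto simp: fun_eq_iff w''_def w'_def w_def hidden_weight_def heavy_edge_def)
  have n1: "neighboring (star_edges n) w w'"
    unfolding w'_def using \<open>i \<notin> S\<close>
    by (intro neighboring_fun_upd finite_star_edges) (simp add: w_def hidden_weight_def heavy_edge_def)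
  have n2: "neighboring (star_edges n) w' w''"
    unfolding w'' using \<open>i \<notin> S\<close>
    by (intro neighboring_fun_upd finite_star_edges) (simp add: w'_def w_def hidden_weight_def heavy_edge_def)
  note forward_bound = edge_dp_distance_two[OF dp n1 n2, of "{T. 2 * i \<in> T}"]
  have "neighboring (star_edges n) w'' w'" "neighboring (star_edges n) w' w"
    using n1 n2 by (simp_all only: neighboring_sym)
  note backward_bound = edge_dp_distance_two[OF dp this, of "{T. 2 * i + 1 \<in> T}"]
  have cover: "1 \<le> measure_pmf.prob (A v) {T. 2 * i \<in> T} +
                     measure_pmf.prob (A v) {T. 2 * i + 1 \<in> T}" for v
    using spanning_tree_star_meets_pair[OF trees \<open>i \<in> {1..n}\<close>]
    by (intro prob_Un_ge_one AE_pmfI) auto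
  have "heavy_edge S i = 2 * i + 1" "heavy_edge (insert i S) i = 2 * i"
    using \<open>i \<notin> S\<close> by (auto simp: heavy_edge_def)
  then show ?thesis
    using swapped_pair_lower_bound[OF forward_bound backward_bound cover cover exp_ge_zero]
    by (simp add: w_def w''_def)
qed

lemma star_privacy_lower_bound:
  assumes dp: "edge_dp \<epsilon> \<delta> (star_edges n) A"
    and trees: "\<forall>w. \<forall>T\<in>set_pmf (A w). spanning_tree (star_vertices n) (star_edges n) star_ends T"
  shows "\<exists>w. (\<forall>e. w e \<in> {0, 1}) \<and> alpha_bound (n + 1) \<epsilon> \<delta> \<le>
           measure_pmf.expectation (A w) (tree_weight w) - mst_weight (star_vertices n) (star_edges n) star_ends w"
proof -
  define K where "K = (1 - (1 + exp \<epsilon>) * \<delta>) / (1 + exp (2 * \<epsilon>))"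
  have "\<exists>S\<subseteq>{1..n}. real (card {1..n}) * K \<le>
          (\<Sum>i\<in>{1..n}. measure_pmf.prob (A (hidden_weight S)) {T. heavy_edge S i \<in> T})"
    using heavy_edge_pair_bound[OF dp trees[rule_format]] unfolding K_def
    by (intro hypercube_averaging) auto
  then obtain S where "real n * K \<le>
      measure_pmf.expectation (A (hidden_weight S)) (tree_weight (hidden_weight S))"
    using expectation_hidden_weight[OF trees[rule_format]] by auto
  moreover have "alpha_bound (n + 1) \<epsilon> \<delta> = real n * K"
    unfolding alpha_bound_def K_def by simp
  ultimately show ?thesis
    using mst_weight_hidden_weight[of n S]
    by (intro exI[of _ "hidden_weight S"]) (auto simp: hidden_weight_def)
qed

lemma alpha_bound_small_parameters:
  assumes "0 \<le> \<epsilon>" "\<epsilon> < 1/1000" "0 \<le> \<delta>" "\<delta> < 1/1000"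
  shows "0.49 * real n \<le> alpha_bound (n + 1) \<epsilon> \<delta>"
proof -
  have "exp \<epsilon> \<le> 1 + 2 * \<epsilon>" "exp (2 * \<epsilon>) \<le> 1 + 2 * (2 * \<epsilon>)"
    by (rule real_exp_bound_lemma; use assms in simp)+
  moreover have "(1 + exp \<epsilon>) * \<delta> \<le> (2 + 2/1000) * (1/1000)"
    using assms \<open>exp \<epsilon> \<le> 1 + 2 * \<epsilon>\<close> by (intro mult_mono) auto
  ultimately have "49/100 * (1 + exp (2 * \<epsilon>)) \<le> 1 - (1 + exp \<epsilon>) * \<delta>"
    using assms by (simp add: field_simps)
  then have "49/100 \<le> (1 - (1 + exp \<epsilon>) * \<delta>) / (1 + exp (2 * \<epsilon>))"
    by (simp add: pos_le_divide_eq add_pos_pos)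
  then have "real n * (49/100) \<le> real n * ((1 - (1 + exp \<epsilon>) * \<delta>) / (1 + exp (2 * \<epsilon>)))"
    by (rule mult_left_mono) simp
  then show ?thesis
    by (simp add: alpha_bound_def)
qed

theorem theoremB1:
  fixes n :: nat and \<epsilon> \<delta> :: real
  assumes "n \<ge> 1" and "0 \<le> \<epsilon>" and "0 \<le> \<delta>"
  shows "(\<exists>(V :: nat set) (E :: nat set) (ends :: nat \<Rightarrow> nat \<times> nat).
            multigraph V E ends \<and> card V = n + 1 \<and> connected_by V ends E \<and>
            (\<forall>A :: (nat \<Rightarrow> real) \<Rightarrow> nat set pmf.
               edge_dp \<epsilon> \<delta> E A \<and> (\<forall>w. \<forall>T\<in>set_pmf (A w). spanning_tree V E ends T) \<longrightarrow>
               (\<exists>w. (\<forall>e\<in>E. w e \<in> {0, 1}) \<and>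
                    measure_pmf.expectation (A w) (tree_weight w) - mst_weight V E ends w
                      \<ge> alpha_bound (card V) \<epsilon> \<delta>)))
       \<and> (\<exists>\<epsilon>0 > 0. \<exists>\<delta>0 > 0. \<forall>e d. 0 \<le> e \<and> e < \<epsilon>0 \<and> 0 \<le> d \<and> d < \<delta>0 \<longrightarrow>
            alpha_bound (n + 1) e d \<ge> 0.49 * (real (n + 1) - 1))"
  apply (rule conjI)
  subgoal
    apply (rule exI[of _ "star_vertices n"], rule exI[of _ "star_edges n"], rule exI[of _ star_ends])
    using star_privacy_lower_bound[of \<epsilon> \<delta> n]
    by (simp add: multigraph_star card_star_vertices connected_star_edges) blast
  subgoal
    using alpha_bound_small_parameters by (intro exI[of _ "1/1000"] conjI allI impI) auto
  done

end
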